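(* Let $M$ be an $(\mathcal R,\mathfrak g)$-module such that $\sigma(\mathfrak g_{\ge1})$ acts as zero on $M$. Then every additive subgroup $M'\subseteq M$ which is stable under the $\mathcal R$-action and under $\rho_{\mathfrak g}(\mathfrak g)$ is also stable under $\sigma(\mathfrak g_{\ge0})$, i.e. $M'$ is an $(\mathcal R,\mathfrak g)$-submodule.
   Context: $\mathbb F$ algebraically closed of characteristic $0$, $m,n\ge1$. $\mathcal R=\mathbb F[x_1,\dots,x_m]\otimes\Lambda(y_1,\dots,y_n)$ ($x_i$ even, $y_s$ odd), parity $\wp$. $\mathfrak g=W(m,n)$ the Lie superalgebra of superderivations of $\mathcal R$, free over $\mathcal R$ on even $\partial_i$ ($\partial_ix_j=\delta_{ij}$) and odd $D_t$ ($D_ty_s=\delta_{ts}$); $\mathfrak g_{\ge k}=\bigoplus_{i\ge k}\mathfrak g_i$ for the grading where $f\partial_j,fD_t\in\mathfrak g_{\deg f-1}$. An $(\mathcal R,\mathfrak g)$-module is an additive group $M$ with an $\mathcal R$-module structure $f\mapsto f_{\mathcal R}$, a $\mathfrak g$-module structure $\rho=\rho_{\mathfrak g}$ and a $\mathfrak g_{\ge0}$-module structure $\sigma$ such that for all $f\in\mathcal R$, $D\in\mathfrak g$, $D'\in\mathfrak g_{\ge0}$, $X\in\{\partial_i,D_j\}$: (i) $[\rho(D),f_{\mathcal R}]=(Df)_{\mathcal R}$; (ii) $[\sigma(D'),f_{\mathcal R}]=0$; (iii) $[\rho(X),\sigma(D')]=0$; (iv) $\rho(fX)=f_{\mathcal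 R}\circ\rho(X)+\sum_{i=1}^m(\partial_if)_{\mathcal R}\circ\sigma(x_iX)+(-1)^{\wp(f)+1}\sum_{j=1}^n(D_jf)_{\mathcal R}\circ\sigma(y_jX)$ (brackets are supercommutators). *)

theory Defs
  imports "HOL-Computational_Algebra.Polynomial"
begin

definition alg_closed :: "'k::field itself \<Rightarrow> bool" where
  "alg_closed _ \<longleftrightarrow> (\<forall>p::'k poly. degree p > 0 \<longrightarrow> (\<exists>x. poly p x = 0))"

section \<open>The superalgebra R = F[x_1..x_m] (x) Lambda(y_1..y_n)\<close>

text \<open>A monomial x^a y_S (with y_S = y_{s_1}...y_{s_k}, s_1 < ... < s_k) is the pair (a, S).
  Variables are indexed from 0: x_0..x_{m-1}, y_0..y_{n-1}.\<close>

type_synonym mono = "(nat \<Rightarrow> nat) \<times> nat set"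
type_synonym 'k sr = "mono \<Rightarrow> 'k"

definition mono_ok :: "nat \<Rightarrow> nat \<Rightarrow> mono \<Rightarrow> bool" where
  "mono_ok m n \<mu> \<longleftrightarrow> (\<forall>i\<ge>m. fst \<mu> i = 0) \<and> snd \<mu> \<subseteq> {..<n}"

definition Rset :: "nat \<Rightarrow> nat \<Rightarrow> ('k::zero) sr set" where
  "Rset m n = {f. finite {\<mu>. f \<mu> \<noteq> 0} \<and> (\<forall>\<mu>. f \<mu> \<noteq> 0 \<longrightarrow> mono_ok m n \<mu>)}"

definition sr_zero :: "('k::zero) sr" where "sr_zero = (\<lambda>_. 0)"
definition sr_add :: "('k::plus) sr \<Rightarrow> 'k sr \<Rightarrow> 'k sr" where
  "sr_add f g = (\<lambda>\<mu>. f \<mu> + g \<mu>)"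
definition sr_scale :: "('k::times) \<Rightarrow> 'k sr \<Rightarrow> 'k sr" where
  "sr_scale c f = (\<lambda>\<mu>. c * f \<mu>)"

definition sr_const :: "('k::zero) \<Rightarrow> 'k sr" where
  "sr_const c = (\<lambda>\<mu>. if \<mu> = (\<lambda>_. 0, {}) then c else 0)"
definition sr_x :: "nat \<Rightarrow> ('k::{zero,one}) sr" where
  "sr_x i = (\<lambda>\<mu>. if \<mu> = ((\<lambda>_. 0)(i := 1), {}) then 1 else 0)"
definition sr_y :: "nat \<Rightarrow> ('k::{zero,one}) sr" where
  "sr_y s = (\<lambda>\<mu>. if \<mu> = (\<lambda>_. 0, {s}) then 1 else 0)"

text \<open>Sign from reordering y_S y_T into increasing order.\<close>
definition ysgn :: "nat set \<Rightarrow> nat set \<Rightarrow> 'k::comm_ring_1" where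
  "ysgn S T = (-1) ^ card {(s,t). s \<in> S \<and> t \<in> T \<and> t < s}"

definition sr_mul :: "('k::comm_ring_1) sr \<Rightarrow> 'k sr \<Rightarrow> 'k sr" where
  "sr_mul f g = (\<lambda>\<mu>. \<Sum>\<alpha>\<in>{\<alpha>. f \<alpha> \<noteq> 0}. \<Sum>\<beta>\<in>{\<beta>. g \<beta> \<noteq> 0}.
      if (\<lambda>i. fst \<alpha> i + fst \<beta> i) = fst \<mu> \<and> snd \<alpha> \<inter> snd \<beta> = {} \<and> snd \<alpha> \<union> snd \<beta> = snd \<mu>
      then ysgn (snd \<alpha>) (snd \<beta>) * f \<alpha> * g \<beta> else 0)"

text \<open>Parity: f is homogeneous of parity p (p = True means odd).\<close>
definition Rhom :: "nat \<Rightarrow> nat \<Rightarrow> bool \<Rightarrow> ('k::zero) sr \<Rightarrow> bool" where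
  "Rhom m n p f \<longleftrightarrow> f \<in> Rset m n \<and> (\<forall>\<mu>. f \<mu> \<noteq> 0 \<longrightarrow> odd (card (snd \<mu>)) = p)"

definition mdeg :: "nat \<Rightarrow> mono \<Rightarrow> nat" where
  "mdeg m \<mu> = (\<Sum>i<m. fst \<mu> i) + card (snd \<mu>)"

text \<open>Partial derivatives: even \<partial>_i and odd (left) D_t.\<close>
definition dx :: "nat \<Rightarrow> ('k::comm_ring_1) sr \<Rightarrow> 'k sr" where
  "dx i h = (\<lambda>\<mu>. of_nat (fst \<mu> i + 1) * h ((fst \<mu>)(i := fst \<mu> i + 1), snd \<mu>))"
definition dy :: "nat \<Rightarrow> ('k::comm_ring_1) sr \<Rightarrow> 'k sr" where
  "dy t h = (\<lambda>\<mu>. if t \<in> snd \<mu> then 0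
                 else (-1) ^ card {s \<in> snd \<mu>. s < t} * h (fst \<mu>, insert t (snd \<mu>)))"

text \<open>An element (a, b) stands for  sum_{i<m} a_i \<partial>_i + sum_{t<n} b_t D_t.\<close>
type_synonym 'k wd = "(nat \<Rightarrow> 'k sr) \<times> (nat \<Rightarrow> 'k sr)"

definition Wset :: "nat \<Rightarrow> nat \<Rightarrow> ('k::zero) wd set" where
  "Wset m n = {D. (\<forall>i. fst D i \<in> Rset m n) \<and> (\<forall>i\<ge>m. fst D i = sr_zero)
                \<and> (\<forall>t. snd D t \<in> Rset m n) \<and> (\<forall>t\<ge>n. snd D t = sr_zero)}"

definition wadd :: "('k::plus) wd \<Rightarrow> 'k wd \<Rightarrow> 'k wd" where
  "wadd D E = ((\<lambda>i. sr_add (fst D i) (fst E i)), (\<lambda>t. sr_add (snd D t) (snd E t)))"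
definition wscale :: "('k::times) \<Rightarrow> 'k wd \<Rightarrow> 'k wd" where
  "wscale c D = ((\<lambda>i. sr_scale c (fst D i)), (\<lambda>t. sr_scale c (snd D t)))"

definition Wdx :: "nat \<Rightarrow> ('k::zero) sr \<Rightarrow> 'k wd" where
  "Wdx i f = ((\<lambda>_. sr_zero)(i := f), (\<lambda>_. sr_zero))"
definition Wdy :: "nat \<Rightarrow> ('k::zero) sr \<Rightarrow> 'k wd" where
  "Wdy t f = ((\<lambda>_. sr_zero), (\<lambda>_. sr_zero)(t := f))"

definition wact :: "nat \<Rightarrow> nat \<Rightarrow> ('k::comm_ring_1) wd \<Rightarrow> 'k sr \<Rightarrow> 'k sr" where
  "wact m n D h = (\<lambda>\<mu>. (\<Sum>i<m. sr_mul (fst D i) (dx i h) \<mu>) + (\<Sum>t<n. sr_mul (snd D t) (dy t h) \<mu>))"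

definition Whom :: "nat \<Rightarrow> nat \<Rightarrow> bool \<Rightarrow> ('k::zero) wd \<Rightarrow> bool" where
  "Whom m n p D \<longleftrightarrow> D \<in> Wset m n \<and> (\<forall>i. Rhom m n p (fst D i)) \<and> (\<forall>t. Rhom m n (\<not> p) (snd D t))"

definition psign :: "bool \<Rightarrow> bool \<Rightarrow> 'k::comm_ring_1" where
  "psign p q = (if p \<and> q then -1 else 1)"

text \<open>Super bracket of homogeneous D1 (parity p), D2 (parity q):
  [D1,D2] = D1 D2 - (-1)^{pq} D2 D1, determined by its values on the generators.\<close>
definition wbr :: "nat \<Rightarrow> nat \<Rightarrow> bool \<Rightarrow> bool \<Rightarrow> ('k::comm_ring_1) wd \<Rightarrow> 'k wd \<Rightarrow> 'k wd" where
  "wbr m n p q D1 D2 =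
     ((\<lambda>i. \<lambda>\<mu>. wact m n D1 (fst D2 i) \<mu> - psign p q * wact m n D2 (fst D1 i) \<mu>),
      (\<lambda>t. \<lambda>\<mu>. wact m n D1 (snd D2 t) \<mu> - psign p q * wact m n D2 (snd D1 t) \<mu>))"

text \<open>g_{\<ge>k}: all coefficients only involve monomials of degree \<ge> k+1.\<close>
definition Wge :: "nat \<Rightarrow> nat \<Rightarrow> nat \<Rightarrow> ('k::zero) wd set" where
  "Wge m n k = {D \<in> Wset m n. (\<forall>i \<mu>. fst D i \<mu> \<noteq> 0 \<longrightarrow> mdeg m \<mu> \<ge> k + 1)
                             \<and> (\<forall>t \<mu>. snd D t \<mu> \<noteq> 0 \<longrightarrow> mdeg m \<mu> \<ge> k + 1)}"

definition opsc :: "bool \<Rightarrow> bool \<Rightarrow> ('m::ab_group_add \<Rightarrow> 'm) \<Rightarrow> ('m \<Rightarrow> 'm) \<Rightarrow> 'm \<Rightarrow> 'm" where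
  "opsc p q A B = (\<lambda>u. if p \<and> q then A (B u) + B (A u) else A (B u) - B (A u))"

definition R_module :: "nat \<Rightarrow> nat \<Rightarrow> (('k::comm_ring_1) sr \<Rightarrow> 'm::ab_group_add \<Rightarrow> 'm) \<Rightarrow> bool" where
  "R_module m n act \<longleftrightarrow>
     (\<forall>f\<in>Rset m n. \<forall>u v. act f (u + v) = act f u + act f v)
   \<and> (\<forall>f\<in>Rset m n. \<forall>g\<in>Rset m n. \<forall>u. act (sr_add f g) u = act f u + act g u)
   \<and> (\<forall>f\<in>Rset m n. \<forall>g\<in>Rset m n. \<forall>u. act (sr_mul f g) u = act f (act g u))
   \<and> (\<forall>u. act (sr_const 1) u = u)"

text \<open>Representation of the Lie superalgebra (the sub-superalgebra S of W(m,n)) on M,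
  where scalars act on M through the R-module structure.\<close>
definition Lie_rep :: "nat \<Rightarrow> nat \<Rightarrow> ('k::comm_ring_1) wd set \<Rightarrow> ('k sr \<Rightarrow> 'm::ab_group_add \<Rightarrow> 'm)
                       \<Rightarrow> ('k wd \<Rightarrow> 'm \<Rightarrow> 'm) \<Rightarrow> bool" where
  "Lie_rep m n S act r \<longleftrightarrow>
     (\<forall>D\<in>S. \<forall>u v. r D (u + v) = r D u + r D v)
   \<and> (\<forall>D\<in>S. \<forall>E\<in>S. \<forall>u. r (wadd D E) u = r D u + r E u)
   \<and> (\<forall>D\<in>S. \<forall>c u. r (wscale c D) u = act (sr_const c) (r D u))
   \<and> (\<forall>p q D E u. D \<in> S \<longrightarrow> E \<in> S \<longrightarrow> Whom m n p D \<longrightarrow> Whom m n q E \<longrightarrow>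
         r (wbr m n p q D E) u = opsc p q (r D) (r E) u)"

definition RG_module :: "nat \<Rightarrow> nat \<Rightarrow> (('k::comm_ring_1) sr \<Rightarrow> 'm::ab_group_add \<Rightarrow> 'm)
                         \<Rightarrow> ('k wd \<Rightarrow> 'm \<Rightarrow> 'm) \<Rightarrow> ('k wd \<Rightarrow> 'm \<Rightarrow> 'm) \<Rightarrow> bool" where
  "RG_module m n act rho sigma \<longleftrightarrow>
     R_module m n act
   \<and> Lie_rep m n (Wset m n) act rho
   \<and> Lie_rep m n (Wge m n 0) act sigma
   \<comment> \<open>(i)\<close>
   \<and> (\<forall>p q D f u. Whom m n p D \<longrightarrow> Rhom m n q f \<longrightarrow>
         opsc p q (rho D) (act f) u = act (wact m n D f) u)
   \<comment> \<open>(ii)\<close>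
   \<and> (\<forall>p q D f u. Whom m n p D \<longrightarrow> D \<in> Wge m n 0 \<longrightarrow> Rhom m n q f \<longrightarrow>
         opsc p q (sigma D) (act f) u = 0)
   \<comment> \<open>(iii)\<close>
   \<and> (\<forall>p D u. Whom m n p D \<longrightarrow> D \<in> Wge m n 0 \<longrightarrow>
         (\<forall>i<m. opsc False p (rho (Wdx i (sr_const 1))) (sigma D) u = 0)
       \<and> (\<forall>j<n. opsc True p (rho (Wdy j (sr_const 1))) (sigma D) u = 0))
   \<comment> \<open>(iv), X = \<partial>_l and X = D_l\<close>
   \<and> (\<forall>p f u. Rhom m n p f \<longrightarrow>
        (\<forall>l<m. rho (Wdx l f) u =
            act f (rho (Wdx l (sr_const 1)) u)
          + (\<Sum>i<m. act (dx i f) (sigma (Wdx l (sr_x i)) u))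
          + (if p then (\<Sum>j<n. act (dy j f) (sigma (Wdx l (sr_y j)) u))
                  else - (\<Sum>j<n. act (dy j f) (sigma (Wdx l (sr_y j)) u))))
      \<and> (\<forall>l<n. rho (Wdy l f) u =
            act f (rho (Wdy l (sr_const 1)) u)
          + (\<Sum>i<m. act (dx i f) (sigma (Wdy l (sr_x i)) u))
          + (if p then (\<Sum>j<n. act (dy j f) (sigma (Wdy l (sr_y j)) u))
                  else - (\<Sum>j<n. act (dy j f) (sigma (Wdy l (sr_y j)) u)))))"

end

theory Submission
  imports Defs
begin

(* Taking f = x_k or f = y_k in axiom (iv) kills every derivative term except one, which is 1,
   so sigma(f X) = rho(f X) - f rho(X) for X = \<partial>_l, D_l; hence sigma maps M' into itself on
   these elements. They span g_0 modulo g_{\<ge>1}, where sigma vanishes, and sigma is additive and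
   R-linear in scalars, so an induction over the finite support of D \<in> g_{\<ge>0} finishes. *)

lemma sr_zero_Rset: "sr_zero \<in> Rset m n"
  by (simp add: Rset_def sr_zero_def)

lemma Rset_subset_support:
  assumes "f \<in> Rset m n" and "\<And>\<mu>. g \<mu> \<noteq> 0 \<Longrightarrow> f \<mu> \<noteq> 0"
  shows "g \<in> Rset m n"
proof -
  have "{\<mu>. g \<mu> \<noteq> 0} \<subseteq> {\<mu>. f \<mu> \<noteq> 0}" using assms(2) by blast
  then show ?thesis using assms finite_subset unfolding Rset_def by blast
qed

definition sr_monom :: "mono \<Rightarrow> 'k::{zero,one} sr" where
  "sr_monom \<mu> = (\<lambda>\<nu>. if \<nu> = \<mu> then 1 else 0)"

lemma sr_monom_Rset: "mono_ok m n \<mu> \<Longrightarrow> sr_monom \<mu> \<in> Rset m n"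
  by (simp add: Rset_def sr_monom_def)

lemma sr_const_Rset: "sr_const c \<in> Rset m n"
proof -
  have "{\<mu>. sr_const c \<mu> \<noteq> 0} \<subseteq> {(\<lambda>_. 0, {})}" by (auto simp: sr_const_def)
  then show ?thesis
    by (auto simp: Rset_def sr_const_def mono_ok_def intro: finite_subset split: if_splits)
qed

lemma sr_x_Rset: "k < m \<Longrightarrow> sr_x k \<in> Rset m n"
  by (simp add: sr_x_def sr_monom_Rset[unfolded sr_monom_def] mono_ok_def)

lemma sr_y_Rset: "j < n \<Longrightarrow> sr_y j \<in> Rset m n"
  by (simp add: sr_y_def sr_monom_Rset[unfolded sr_monom_def] mono_ok_def)

lemma Rhom_sr_x: "k < m \<Longrightarrow> Rhom m n False (sr_x k)"
  using sr_x_Rset by (auto simp: Rhom_def sr_x_def split: if_splits)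

lemma Rhom_sr_y: "j < n \<Longrightarrow> Rhom m n True (sr_y j)"
  using sr_y_Rset by (auto simp: Rhom_def sr_y_def split: if_splits)

lemma dx_sr_x: "dx i (sr_x k :: 'k::comm_ring_1 sr) = (if i = k then sr_const 1 else sr_zero)"
proof (rule ext)
  fix \<mu> :: mono
  obtain a S where \<mu>: "\<mu> = (a, S)" by (cases \<mu>)
  show "dx i (sr_x k :: 'k sr) \<mu> = (if i = k then sr_const 1 else sr_zero) \<mu>"
  proof (cases "i = k")
    case True
    then have "a(i := Suc (a i)) = (\<lambda>_. 0)(k := 1) \<longleftrightarrow> a = (\<lambda>_. 0)"
      by (auto simp: fun_eq_iff split: if_splits)
    then show ?thesis using True by (auto simp: \<mu> dx_def sr_x_def sr_const_def)
  next
    case False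
    then have "a(i := Suc (a i)) \<noteq> (\<lambda>_. 0)(k := 1)"
      by (auto simp: fun_eq_iff dest: spec[of _ i])
    then show ?thesis using False by (auto simp: \<mu> dx_def sr_x_def sr_zero_def)
  qed
qed

lemma dy_sr_x: "dy j (sr_x k :: 'k::comm_ring_1 sr) = sr_zero"
  by (auto simp: fun_eq_iff dy_def sr_x_def sr_zero_def)

lemma dx_sr_y: "dx i (sr_y s :: 'k::comm_ring_1 sr) = sr_zero"
  by (auto simp: fun_eq_iff dx_def sr_y_def sr_zero_def dest: fun_cong[of _ _ i])

lemma dy_sr_y: "dy j (sr_y s :: 'k::comm_ring_1 sr) = (if j = s then sr_const 1 else sr_zero)"
  by (auto simp: fun_eq_iff dy_def sr_y_def sr_const_def sr_zero_def)

definition sr_linear :: "nat \<Rightarrow> nat \<Rightarrow> ('k::{zero,one}) sr set" where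
  "sr_linear m n = sr_x ` {..<m} \<union> sr_y ` {..<n}"

lemma sr_linear_Rset: "f \<in> sr_linear m n \<Longrightarrow> f \<in> Rset m n"
  by (auto simp: sr_linear_def sr_x_Rset sr_y_Rset)

lemma sr_monom_mdeg_1:
  assumes "mono_ok m n \<mu>" and "mdeg m \<mu> = 1"
  shows "(sr_monom \<mu> :: 'k::{zero,one} sr) \<in> sr_linear m n"
proof -
  obtain a S where \<mu>: "\<mu> = (a, S)" by (cases \<mu>)
  have a_out: "\<forall>i\<ge>m. a i = 0" and S: "S \<subseteq> {..<n}"
    using assms(1) by (auto simp: mono_ok_def \<mu>)
  have deg: "(\<Sum>i<m. a i) + card S = 1"
    using assms(2) by (simp add: mdeg_def \<mu>)
  show ?thesis
  proof (cases "S = {}")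
    case True
    then obtain k where k: "k < m" "a k = 1" "\<forall>i<m. i \<noteq> k \<longrightarrow> a i = 0"
      using deg sum_eq_1_iff[of "{..<m}" a] by auto
    then have "a = (\<lambda>_. 0)(k := 1)"
      using a_out by (intro ext) (metis fun_upd_other fun_upd_same not_less)
    then have "sr_monom \<mu> = (sr_x k :: 'k sr)" by (simp add: sr_monom_def sr_x_def \<mu> True)
    then show ?thesis using k by (simp add: sr_linear_def)
  next
    case False
    then have "card S \<noteq> 0" using finite_subset[OF S] by simp
    then have "card S = 1" and "(\<Sum>i<m. a i) = 0" using deg by linarith+
    then have a: "a = (\<lambda>_. 0)"
      using a_out by (auto simp: fun_eq_iff) (metis lessThan_iff not_less)
    obtain j where j: "S = {j}"
      using \<open>card S = 1\<close> by (auto simp: card_1_singleton_iff)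
    then have "sr_monom \<mu> = (sr_y j :: 'k sr)" by (simp add: sr_monom_def sr_y_def \<mu> a)
    then show ?thesis using S j by (simp add: sr_linear_def)
  qed
qed

(* Coordinates of W(m,n): Inl i indexes the coefficient of \<partial>_i, Inr t that of D_t. *)
definition wcoef :: "'k wd \<Rightarrow> nat + nat \<Rightarrow> 'k sr" where
  "wcoef D = case_sum (fst D) (snd D)"

definition wcoord :: "nat \<Rightarrow> nat \<Rightarrow> nat + nat \<Rightarrow> bool" where
  "wcoord m n = case_sum (\<lambda>i. i < m) (\<lambda>t. t < n)"

definition Wfield :: "nat + nat \<Rightarrow> ('k::zero) sr \<Rightarrow> 'k wd" where
  "Wfield = case_sum Wdx Wdy"

definition wsupp :: "('k::zero) wd \<Rightarrow> ((nat + nat) \<times> mono) set" where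
  "wsupp D = {(a, \<mu>). wcoef D a \<mu> \<noteq> 0}"

definition wrestrict :: "('k::zero) wd \<Rightarrow> ((nat + nat) \<times> mono) set \<Rightarrow> 'k wd" where
  "wrestrict D A =
     ((\<lambda>i \<mu>. if (Inl i, \<mu>) \<in> A then fst D i \<mu> else 0), (\<lambda>t \<mu>. if (Inr t, \<mu>) \<in> A then snd D t \<mu> else 0))"

lemma wd_eqI: "(\<And>a \<mu>. wcoef D a \<mu> = wcoef E a \<mu>) \<Longrightarrow> D = E"
  by (metis wcoef_def prod_eqI ext sum.case)

lemma wcoef_wadd: "wcoef (wadd D E) a \<mu> = wcoef D a \<mu> + wcoef E a \<mu>"
  by (cases a) (simp_all add: wcoef_def wadd_def sr_add_def)

lemma wcoef_wscale: "wcoef (wscale c D) a \<mu> = c * wcoef D a \<mu>"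
  by (cases a) (simp_all add: wcoef_def wscale_def sr_scale_def)

lemma wcoef_Wfield: "wcoef (Wfield a f) b = (if b = a then f else sr_zero)"
  by (cases a; cases b) (simp_all add: wcoef_def Wfield_def Wdx_def Wdy_def)

lemma wcoef_wrestrict: "wcoef (wrestrict D A) a \<mu> = (if (a, \<mu>) \<in> A then wcoef D a \<mu> else 0)"
  by (cases a) (simp_all add: wcoef_def wrestrict_def)

lemma Wfield_Wset: "wcoord m n a \<Longrightarrow> f \<in> Rset m n \<Longrightarrow> Wfield a f \<in> Wset m n"
  by (cases a) (auto simp: Wset_def Wfield_def Wdx_def Wdy_def wcoord_def sr_zero_Rset)

lemma Wset_iff_wcoef:
  "D \<in> Wset m n \<longleftrightarrow>
     (\<forall>a. wcoef D a \<in> Rset m n \<and> (\<not> wcoord m n a \<longrightarrow> wcoef D a = sr_zero))"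
  unfolding Wset_def split_sum_all wcoef_def wcoord_def by auto

lemma Wge_iff_wcoef:
  "D \<in> Wge m n k \<longleftrightarrow> D \<in> Wset m n \<and> (\<forall>a \<mu>. wcoef D a \<mu> \<noteq> 0 \<longrightarrow> k + 1 \<le> mdeg m \<mu>)"
  unfolding Wge_def split_sum_all wcoef_def by auto

lemma wsupp_wrestrict: "wsupp (wrestrict D A) = wsupp D \<inter> A"
  by (auto simp: wsupp_def wcoef_wrestrict)

lemma wadd_wrestrict_Compl: "wadd (wrestrict D A) (wrestrict D (- A)) = (D :: ('k::monoid_add) wd)"
  by (rule wd_eqI) (simp add: wcoef_wadd wcoef_wrestrict)

lemma wrestrict_Wge: "D \<in> Wge m n k \<Longrightarrow> wrestrict D A \<in> Wge m n k"
  unfolding Wge_iff_wcoef Wset_iff_wcoef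
  by (auto simp: wcoef_wrestrict sr_zero_def intro: Rset_subset_support split: if_splits)

lemma finite_wsupp:
  assumes "D \<in> Wset m n"
  shows "finite (wsupp D)"
proof -
  have "wsupp D \<subseteq> (\<Union>a\<in>{a. wcoord m n a}. Pair a ` {\<mu>. wcoef D a \<mu> \<noteq> 0})"
  proof
    fix x assume "x \<in> wsupp D"
    then obtain a \<mu> where x: "x = (a, \<mu>)" and a\<mu>: "wcoef D a \<mu> \<noteq> 0"
      by (auto simp: wsupp_def)
    then have "wcoord m n a" using assms unfolding Wset_iff_wcoef by (metis sr_zero_def)
    then show "x \<in> (\<Union>a\<in>{a. wcoord m n a}. Pair a ` {\<mu>. wcoef D a \<mu> \<noteq> 0})"
      using x a\<mu> by blast
  qed
  moreover have "{a. wcoord m n a} = Inl ` {..<m} \<union> Inr ` {..<n}"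
  proof (rule set_eqI)
    fix a :: "nat + nat"
    show "a \<in> {a. wcoord m n a} \<longleftrightarrow> a \<in> Inl ` {..<m} \<union> Inr ` {..<n}"
      by (cases a) (auto simp: wcoord_def)
  qed
  moreover have "finite {\<mu>. wcoef D a \<mu> \<noteq> 0}" for a
    using assms unfolding Wset_iff_wcoef Rset_def by blast
  ultimately show ?thesis by (simp add: finite_subset)
qed

lemma Wfield_linear_Wge0:
  assumes "wcoord m n a" and "f \<in> sr_linear m n"
  shows "Wfield a f \<in> Wge m n 0"
proof -
  have "mdeg m \<mu> = 1" if "f \<mu> \<noteq> 0" for \<mu>
    using assms(2) that
    by (auto simp: sr_linear_def sr_x_def sr_y_def mdeg_def sum.delta split: if_splits)
  then show ?thesis
    using assms Wfield_Wset[OF assms(1) sr_linear_Rset]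
    by (auto simp: Wge_iff_wcoef wcoef_Wfield sr_zero_def split: if_splits)
qed

lemma Wge_support_induct[consumes 1, case_names single wadd]:
  fixes D :: "('k::monoid_add) wd"
  assumes "D \<in> Wge m n k"
    and single: "\<And>D e. D \<in> Wge m n k \<Longrightarrow> wsupp D \<subseteq> {e} \<Longrightarrow> P D"
    and add: "\<And>D E. D \<in> Wge m n k \<Longrightarrow> E \<in> Wge m n k \<Longrightarrow> P D \<Longrightarrow> P E \<Longrightarrow> P (wadd D E)"
  shows "P D"
proof -
  have "P D" if "finite S" "D \<in> Wge m n k" "wsupp D \<subseteq> S" for S D
    using that
  proof (induction S arbitrary: D rule: finite_induct)
    case empty
    then show ?case using single by blast
  next
    case (insert e S)
    have "P (wrestrict D {e})"
      by (rule single[where e = e, OF wrestrict_Wge[OF insert.prems(1)]])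
         (simp add: wsupp_wrestrict)
    moreover have "P (wrestrict D (- {e}))"
      by (rule insert.IH[OF wrestrict_Wge[OF insert.prems(1)]])
         (use insert.prems(2) in \<open>auto simp: wsupp_wrestrict\<close>)
    ultimately have "P (wadd (wrestrict D {e}) (wrestrict D (- {e})))"
      by (intro add wrestrict_Wge insert.prems(1))
    then show ?case by (simp only: wadd_wrestrict_Compl)
  qed
  moreover have "finite (wsupp D)"
    using assms(1) finite_wsupp unfolding Wge_iff_wcoef by blast
  ultimately show ?thesis using assms(1) by blast
qed

lemma Wge0_single_entry_cases:
  fixes D :: "('k::comm_ring_1) wd"
  assumes D: "D \<in> Wge m n 0" and supp: "wsupp D \<subseteq> {(a, \<mu>)}"
  shows "D \<in> Wge m n 1 \<or> (wcoord m n a \<and> (\<exists>f\<in>sr_linear m n. D = wscale (wcoef D a \<mu>) (Wfield a f)))"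
proof -
  have zero_off: "wcoef D b \<nu> = 0" if "(b, \<nu>) \<noteq> (a, \<mu>)" for b \<nu>
    using supp that by (auto simp: wsupp_def)
  have DW: "D \<in> Wset m n" and deg: "\<And>b \<nu>. wcoef D b \<nu> \<noteq> 0 \<Longrightarrow> 1 \<le> mdeg m \<nu>"
    using D by (auto simp: Wge_iff_wcoef)
  show ?thesis
  proof (cases "wcoef D a \<mu> \<noteq> 0 \<and> mdeg m \<mu> = 1")
    case False
    then have "wcoef D b \<nu> \<noteq> 0 \<Longrightarrow> 2 \<le> mdeg m \<nu>" for b \<nu>
      using deg[of b \<nu>] zero_off[of b \<nu>] by fastforce
    then have "D \<in> Wge m n 1" using DW by (auto simp: Wge_iff_wcoef numeral_2_eq_2)
    then show ?thesis ..
  next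
    case True
    then have "wcoef D a \<noteq> sr_zero" by (auto simp: sr_zero_def)
    then have a: "wcoord m n a" and "wcoef D a \<in> Rset m n"
      using DW by (auto simp: Wset_iff_wcoef)
    then have "mono_ok m n \<mu>" using True unfolding Rset_def by blast
    then have lin: "sr_monom \<mu> \<in> sr_linear m n" using True sr_monom_mdeg_1 by blast
    have "D = wscale (wcoef D a \<mu>) (Wfield a (sr_monom \<mu>))"
      by (rule wd_eqI)
         (auto simp: wcoef_wscale wcoef_Wfield sr_monom_def sr_zero_def zero_off)
    then show ?thesis using a lin by blast
  qed
qed

lemma R_module_act_one: "R_module m n act \<Longrightarrow> act (sr_const 1) u = u"
  by (simp add: R_module_def)

lemma R_module_act_sr_zero:
  fixes act :: "('k::comm_ring_1) sr \<Rightarrow> 'm::ab_group_add \<Rightarrow> 'm"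
  assumes "R_module m n act"
  shows "act sr_zero u = 0"
proof -
  have "act (sr_add sr_zero sr_zero) u = act sr_zero u + act sr_zero u"
    using assms sr_zero_Rset[of m n] unfolding R_module_def by blast
  moreover have "sr_add sr_zero sr_zero = (sr_zero :: 'k sr)"
    by (simp add: sr_add_def sr_zero_def)
  ultimately show ?thesis by simp
qed

lemma RG_module_sigma_wadd:
  "RG_module m n act rho sigma \<Longrightarrow> D \<in> Wge m n 0 \<Longrightarrow> E \<in> Wge m n 0 \<Longrightarrow>
     sigma (wadd D E) u = sigma D u + sigma E u"
  by (simp add: RG_module_def Lie_rep_def)

lemma RG_module_sigma_wscale:
  "RG_module m n act rho sigma \<Longrightarrow> D \<in> Wge m n 0 \<Longrightarrow>
     sigma (wscale c D) u = act (sr_const c) (sigma D u)"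
  by (simp add: RG_module_def Lie_rep_def)

lemma RG_module_rho_Wfield:
  assumes "RG_module m n act rho sigma" and "Rhom m n p f" and "wcoord m n a"
  shows "rho (Wfield a f) u =
      act f (rho (Wfield a (sr_const 1)) u)
    + (\<Sum>i<m. act (dx i f) (sigma (Wfield a (sr_x i)) u))
    + (if p then (\<Sum>j<n. act (dy j f) (sigma (Wfield a (sr_y j)) u))
            else - (\<Sum>j<n. act (dy j f) (sigma (Wfield a (sr_y j)) u)))"
  using assms by (cases a) (simp_all add: RG_module_def Wfield_def wcoord_def)

lemma RG_module_rho_Wfield_linear:
  assumes RG: "RG_module m n act rho sigma" and a: "wcoord m n a" and f: "f \<in> sr_linear m n"
  shows "rho (Wfield a f) u = act f (rho (Wfield a (sr_const 1)) u) + sigma (Wfield a f) u"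
proof -
  have R: "R_module m n act" using RG by (simp add: RG_module_def)
  have act_zero: "act sr_zero v = 0" for v
    by (rule R_module_act_sr_zero[OF R])
  have act_delta: "act (if b then sr_const 1 else sr_zero) v = (if b then v else 0)" for b v
    by (simp add: R_module_act_one[OF R] act_zero)
  from f consider (x) k where "k < m" "f = sr_x k" | (y) k where "k < n" "f = sr_y k"
    by (auto simp: sr_linear_def)
  then show ?thesis
  proof cases
    case x
    then show ?thesis
      using RG_module_rho_Wfield[OF RG Rhom_sr_x[OF x(1)] a, of u]
      by (simp add: dx_sr_x dy_sr_x act_delta act_zero)
  next
    case y
    then show ?thesis
      using RG_module_rho_Wfield[OF RG Rhom_sr_y[OF y(1)] a, of u]
      by (simp add: dx_sr_y dy_sr_y act_delta act_zero)
  qed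
qed

lemma RG_module_sigma_closed:
  fixes act :: "('k::comm_ring_1) sr \<Rightarrow> 'm::ab_group_add \<Rightarrow> 'm"
  assumes RG: "RG_module m n act rho sigma"
    and sigma_Wge1: "\<And>D u. D \<in> Wge m n 1 \<Longrightarrow> sigma D u = 0"
    and zero: "0 \<in> M'"
    and add: "\<And>u v. u \<in> M' \<Longrightarrow> v \<in> M' \<Longrightarrow> u + v \<in> M'"
    and uminus: "\<And>u. u \<in> M' \<Longrightarrow> - u \<in> M'"
    and act: "\<And>f u. f \<in> Rset m n \<Longrightarrow> u \<in> M' \<Longrightarrow> act f u \<in> M'"
    and rho: "\<And>D u. D \<in> Wset m n \<Longrightarrow> u \<in> M' \<Longrightarrow> rho D u \<in> M'"
    and "D \<in> Wge m n 0" and "u \<in> M'"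
  shows "sigma D u \<in> M'"
proof -
  have diff: "v - w \<in> M'" if "v \<in> M'" "w \<in> M'" for v w
    using add uminus that by (metis diff_conv_add_uminus)
  have sigma_Wfield: "sigma (Wfield a f) u \<in> M'"
    if a: "wcoord m n a" and f: "f \<in> sr_linear m n" and u: "u \<in> M'" for a f u
  proof -
    have "sigma (Wfield a f) u = rho (Wfield a f) u - act f (rho (Wfield a (sr_const 1)) u)"
      using RG_module_rho_Wfield_linear[OF RG a f, of u] by (simp add: algebra_simps)
    moreover have "rho (Wfield a f) u - act f (rho (Wfield a (sr_const 1)) u) \<in> M'"
      by (intro diff act rho Wfield_Wset a sr_linear_Rset[OF f] sr_const_Rset u)
    ultimately show ?thesis by simp
  qed
  have "\<forall>u\<in>M'. sigma D u \<in> M'"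
    using \<open>D \<in> Wge m n 0\<close>
  proof (induction rule: Wge_support_induct)
    case (single D e)
    obtain a \<mu> where e: "e = (a, \<mu>)" by (cases e)
    from Wge0_single_entry_cases[OF single(1) single(2)[unfolded e]] show ?case
    proof
      assume "D \<in> Wge m n 1"
      then show ?case by (simp add: sigma_Wge1 zero)
    next
      assume "wcoord m n a \<and> (\<exists>f\<in>sr_linear m n. D = wscale (wcoef D a \<mu>) (Wfield a f))"
      then obtain f where a: "wcoord m n a" and f: "f \<in> sr_linear m n"
        and D: "D = wscale (wcoef D a \<mu>) (Wfield a f)" by blast
      show ?case
        using RG_module_sigma_wscale[OF RG Wfield_linear_Wge0[OF a f]]
        by (subst D) (simp add: act sr_const_Rset sigma_Wfield[OF a f])
    qed
  next
    case (wadd D E)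
    then show ?case by (simp add: RG_module_sigma_wadd[OF RG] add)
  qed
  then show ?thesis using \<open>u \<in> M'\<close> by blast
qed

theorem mainTheorem15:
  fixes m n :: nat
    and act :: "('k::field_char_0) sr \<Rightarrow> 'm::ab_group_add \<Rightarrow> 'm"
    and rho sigma :: "'k wd \<Rightarrow> 'm \<Rightarrow> 'm"
    and M' :: "'m set"
  assumes "alg_closed TYPE('k)"
    and "m \<ge> 1" and "n \<ge> 1"
    and "RG_module m n act rho sigma"
    and "\<forall>D\<in>Wge m n 1. \<forall>u. sigma D u = 0"
    and "0 \<in> M'" and "\<forall>u\<in>M'. \<forall>v\<in>M'. u + v \<in> M'" and "\<forall>u\<in>M'. - u \<in> M'"
    and "\<forall>f\<in>Rset m n. \<forall>u\<in>M'. act f u \<in> M'"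
    and "\<forall>D\<in>Wset m n. \<forall>u\<in>M'. rho D u \<in> M'"
  shows "\<forall>D\<in>Wge m n 0. \<forall>u\<in>M'. sigma D u \<in> M'"
  using RG_module_sigma_closed[OF assms(4), of M'] assms(5-10) by simp

end
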